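(* Consider $m$ agents $i=1,\ldots,m$ with data and weight matrix $W$ as described in the context. Fix $\hat{\delta}>0$, an integer $T\ge1$, and a time $t\ge\max(t_1,t_2,t_3)$, where $t_1=8n+16\log\frac{2}{\hat\delta}$, $t_2=\left(\frac{16\hat{\mu}(\sqrt{4n}+\sqrt{2\log\frac{2}{\hat\delta}})}{\sigma_x}\right)^2$, $t_3=2(n+l)\log\frac{1}{\hat\delta}$. On the event $E_3$ defined in the context, for all $i\in\{1,\ldots,m\}$, $$\|(\beta^T_{i,t+1})^{-1}-\bar\beta_{t+1}^{-1}\|\le(\rho(W))^T\frac{c_3}{t},$$ where $c_3=\frac{152m^{3/2}\sqrt{5n}}{\sigma_x^2}+\frac{64m^{3/2}\sqrt{5n}}{\sigma_x^4}\hat\mu^2$.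
   Context: Data model: each agent $i\in\{1,\dots,m\}$ observes at times $j=1,2,\ldots$ pairs $(x_{i,j},y_{i,j})$ with $y_{i,j}=\Theta x_{i,j}+\eta_{i,j}$, $\Theta\in\mathbb{R}^{l\times n}$ unknown, $x_{i,j}\sim\mathcal{N}(\mu_{i,j},\sigma_x^2I_n)$, $\eta_{i,j}\sim\mathcal{N}(0,\sigma_\eta^2I_l)$, all mutually independent over time and agents, with deterministic means and $\sup_{i,j}\|\mu_{i,j}\|=\hat\mu<\infty$; $\sigma_x,\sigma_\eta>0$. The agents communicate over an undirected connected graph; $W\in\mathbb{R}^{m\times m}$ satisfies: $W(i,j)\ge0$, $W(i,j)=0$ if $j$ is not a neighbor of $i$ and $i\ne j$, $W\mathbf 1_m=\mathbf 1_m$, $W=W^*$, and $\rho(W)=\max\{\lambda_2(W),-\lambda_m(W)\}<1$, where $\lambda_1(W)\ge\cdots\ge\lambda_m(W)$ are the (real) eigenvalues of $W$. Define $\beta_{i,t+1}=\sum_{j=1}^tx_{i,j}x_{i,j}^*$, $\bar\beta_{t+1}=\frac1m\sum_{i=1}^m\beta_{i,t+1}$, and $\beta^0_{i,t+1}=\beta_{i,t+1}$, $\beta^{k+1}_{i,t+1}=\sum_{j=1}^mW(i,j)\beta^k_{j,t+1}$ for $k=0,\ldots,T-1$. Let $\bar{\mu}_{i,t}=\frac{4}{t\sigma_x^2}\sum_{j=1}^t\mu_{i,j}\mu_{i,j}^*$. The event $E_3$ is the intersection over all $i$ of $\{\|\sum_{j=1}^tx_{i,j}x_{i,j}^*\|\le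 t(\frac{19}{8}\sigma_x^2+\hat\mu^2)\}$, $\{\lambda_{\min}(\sum_{j=1}^tx_{i,j}x_{i,j}^* )\ge\frac{t\sigma_x^2}{8}\lambda_{\min}(I_n+\bar\mu_{i,t})\}$, and $\{\|\sum_{j=1}^t\eta_{i,j}x_{i,j}^*\|\le\sqrt t\,\sigma_\eta(4\sigma_x\sqrt{(n+l)\log\frac9{\hat\delta}}+\hat\mu(\sqrt{2(l+n)}+\sqrt{2\log\frac2{\hat\delta}}))\}$. $\|\cdot\|$ is the spectral norm, $A^*$ the transpose. *)

theory Defs
  imports "HOL-Analysis.Analysis" "HOL-Computational_Algebra.Polynomial" "HOL-Library.Multiset"
begin

definition outer :: "real^'a \<Rightarrow> real^'b \<Rightarrow> real^'b^'a" where
  "outer u v = (\<chi> a b. u $ a * v $ b)"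

definition spec_norm :: "real^'n^'m \<Rightarrow> real" where
  "spec_norm A = onorm (\<lambda>v. A *v v)"

definition char_poly :: "real^'n^'n \<Rightarrow> real poly" where
  "char_poly A = det ((\<chi> i j. (if i = j then [:0, 1:] else 0) - [:A $ i $ j:]) :: real poly^'n^'n)"

definition eigvals :: "real^'n^'n \<Rightarrow> real multiset" where
  "eigvals A = proots (char_poly A)"

text \<open>Eigenvalues in non-increasing order: lambda_1 >= lambda_2 >= ... (list index k-1).\<close>
definition eig_desc :: "real^'n^'n \<Rightarrow> real list" where
  "eig_desc A = rev (sorted_list_of_multiset (eigvals A))"

definition lambda_min :: "real^'n^'n \<Rightarrow> real" where
  "lambda_min A = Min (set_mset (eigvals A))"

definition rho :: "real^'m^'m \<Rightarrow> real" where
  "rho W = max (eig_desc W ! 1) (- lambda_min W)"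

fun cons_iter :: "real^'m^'m \<Rightarrow> ('m \<Rightarrow> real^'n^'n) \<Rightarrow> nat \<Rightarrow> 'm \<Rightarrow> real^'n^'n" where
  "cons_iter W B 0 i = B i"
| "cons_iter W B (Suc k) i = (\<Sum>j\<in>UNIV. W $ i $ j *\<^sub>R cons_iter W B k j)"

end

theory Submission
  imports Defs
begin

(* Since beta^T_i = sum_j (W^T)_ij beta_j, two estimates suffice.  A symmetric stochastic W has
  the eigenvector 1/sqrt m with eigenvalue 1, and rho(W) < 1 puts all its other eigenvalues into
  [-rho(W), rho(W)], so the spectral decomposition of W^T gives |(W^T)_ij - 1/m| <= rho(W)^T.
  On E_3 every beta_j has norm at most N = t (19/8 sigma_x^2 + muhat^2) and quadratic form
  v . beta_j v >= c |v|^2 with c = t sigma_x^2 / 8; this lower bound survives convex combinations,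
  so beta^T_i and the average are invertible with inverses of norm at most 1/c.  Then
  A^-1 - B^-1 = A^-1 (B - A) B^-1 bounds the difference by m rho(W)^T N / c^2 <= rho(W)^T c_3 / t. *)

section \<open>Spectral theorem for symmetric matrices\<close>

lemma inner_matrix_vector_symmetric:
  fixes A :: "real^'n^'n"
  assumes "transpose A = A"
  shows "x \<bullet> (A *v y) = (A *v x) \<bullet> y"
  by (metis assms dot_lmul_matrix vector_transpose_matrix)

lemma linear_coeff_zero_if_quadratic_nonpos:
  fixes a c :: real
  assumes "\<And>s. 2 * s * a + s\<^sup>2 * c \<le> 0"
  shows "a = 0"
proof -
  define k where "k = \<bar>c\<bar> + 1"
  have k: "k > 0" "2 * k + c > 0"
    unfolding k_def by (cases "c \<ge> 0"; simp)+
  have "2 * (a / k) * a + (a / k)\<^sup>2 * c = a\<^sup>2 * (2 * k + c) / k\<^sup>2"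
    using k by (simp add: field_simps power2_eq_square)
  then have "a\<^sup>2 * (2 * k + c) / k\<^sup>2 \<le> 0"
    using assms[of "a / k"] by simp
  then have "a\<^sup>2 \<le> 0"
    using k by (simp add: divide_le_0_iff mult_le_0_iff)
  then show ?thesis by simp
qed

lemma subspace_max_quadratic_form:
  fixes A :: "real^'n^'n"
  assumes S: "subspace S" and nz: "S \<noteq> {0}"
  obtains u where "u \<in> S" "norm u = 1" "\<And>w. w \<in> S \<Longrightarrow> w \<bullet> (A *v w) \<le> (u \<bullet> (A *v u)) * (w \<bullet> w)"
proof -
  define K where "K = S \<inter> sphere 0 1"
  have "compact K"
    unfolding K_def by (intro closed_Int_compact closed_subspace S compact_sphere)
  obtain v where v: "v \<in> S" "v \<noteq> 0"
    using nz S subspace_0 by blast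
  have "v /\<^sub>R norm v \<in> K"
    unfolding K_def using v S by (auto simp: subspace_scale)
  then have "K \<noteq> {}" by auto
  have "continuous_on K (\<lambda>v. v \<bullet> (A *v v))"
    by (intro continuous_intros linear_continuous_on matrix_vector_mul_bounded_linear)
  then obtain u where u: "u \<in> K" and umax: "\<And>w. w \<in> K \<Longrightarrow> w \<bullet> (A *v w) \<le> u \<bullet> (A *v u)"
    using continuous_attains_sup[OF \<open>compact K\<close> \<open>K \<noteq> {}\<close>] by blast
  have bound: "w \<bullet> (A *v w) \<le> (u \<bullet> (A *v u)) * (w \<bullet> w)" if "w \<in> S" for w
  proof (cases "w = 0")
    case False
    have "w /\<^sub>R norm w \<in> K"
      unfolding K_def using that S False by (auto simp: subspace_scale)
    then have "(w /\<^sub>R norm w) \<bullet> (A *v (w /\<^sub>R norm w)) \<le> u \<bullet> (A *v u)"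
      by (rule umax)
    then have "(w \<bullet> (A *v w)) / (norm w)\<^sup>2 \<le> u \<bullet> (A *v u)"
      by (simp add: matrix_vector_mult_scaleR power2_eq_square field_simps)
    then show ?thesis
      using False by (simp add: divide_le_eq mult.commute power2_norm_eq_inner)
  qed simp
  have "u \<in> S" and "norm u = 1"
    using u unfolding K_def by auto
  from this bound show ?thesis
    by (rule that)
qed

(* With l = u . A u and r = A u - l u, the form along u + s r stays below l |u + s r|^2 for all s,
  which by linear_coeff_zero_if_quadratic_nonpos forces r = 0. *)
lemma symmetric_max_quadratic_form_eigenvector:
  fixes A :: "real^'n^'n"
  assumes sym: "transpose A = A" and S: "subspace S" and inv: "\<And>v. v \<in> S \<Longrightarrow> A *v v \<in> S"
    and uS: "u \<in> S" and uu: "u \<bullet> u = 1"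
    and max: "\<And>w. w \<in> S \<Longrightarrow> w \<bullet> (A *v w) \<le> (u \<bullet> (A *v u)) * (w \<bullet> w)"
  shows "A *v u = (u \<bullet> (A *v u)) *\<^sub>R u"
proof -
  define l where "l = u \<bullet> (A *v u)"
  define r where "r = A *v u - l *\<^sub>R u"
  have rS: "r \<in> S"
    unfolding r_def using inv uS S by (simp add: subspace_diff subspace_scale)
  have ru: "r \<bullet> u = 0"
    unfolding r_def l_def using uu inner_matrix_vector_symmetric[OF sym, of u u]
    by (simp add: inner_diff_left inner_diff_right inner_commute)
  have rAu: "r \<bullet> (A *v u) = r \<bullet> r"
    using ru unfolding r_def by (simp add: inner_diff_right)
  have uAr: "u \<bullet> (A *v r) = r \<bullet> r"
    using inner_matrix_vector_symmetric[OF sym, of u r] rAu by (simp add: inner_commute)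
  have "2 * s * (r \<bullet> r) + s\<^sup>2 * (r \<bullet> (A *v r) - l * (r \<bullet> r)) \<le> 0" for s
  proof -
    have "u + s *\<^sub>R r \<in> S"
      using uS rS S by (simp add: subspace_add subspace_scale)
    from max[OF this]
    have le: "(u + s *\<^sub>R r) \<bullet> (A *v (u + s *\<^sub>R r)) \<le> l * ((u + s *\<^sub>R r) \<bullet> (u + s *\<^sub>R r))"
      unfolding l_def .
    have form: "(u + s *\<^sub>R r) \<bullet> (A *v (u + s *\<^sub>R r)) = l + 2 * s * (r \<bullet> r) + s\<^sup>2 * (r \<bullet> (A *v r))"
      using rAu uAr unfolding l_def
      by (simp add: matrix_vector_right_distrib matrix_vector_mult_scaleR inner_add_left
          inner_add_right power2_eq_square algebra_simps)
    have sq: "(u + s *\<^sub>R r) \<bullet> (u + s *\<^sub>R r) = 1 + s\<^sup>2 * (r \<bullet> r)"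
      using uu ru by (simp add: inner_add_left inner_add_right inner_commute power2_eq_square algebra_simps)
    have "l + 2 * s * (r \<bullet> r) + s\<^sup>2 * (r \<bullet> (A *v r)) \<le> l * (1 + s\<^sup>2 * (r \<bullet> r))"
      using le unfolding form sq .
    then show ?thesis by (simp add: algebra_simps)
  qed
  then have "r \<bullet> r = 0"
    by (rule linear_coeff_zero_if_quadratic_nonpos)
  then show ?thesis
    unfolding r_def l_def by simp
qed

lemma span_insert_unit_orthogonal_complement:
  assumes S: "subspace S" and uS: "u \<in> S" and uu: "u \<bullet> u = 1"
    and B: "span B = S \<inter> {v. u \<bullet> v = 0}"
  shows "span (insert u B) = S"
proof
  have "B \<subseteq> S"
    using B span_superset by blast
  then show "span (insert u B) \<subseteq> S"
    using uS S by (intro span_minimal) auto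
  show "S \<subseteq> span (insert u B)"
  proof
    fix v assume v: "v \<in> S"
    have "v - (u \<bullet> v) *\<^sub>R u \<in> span B"
      unfolding B using v uS uu S by (auto simp: subspace_diff subspace_scale inner_diff_right)
    then have "v - (u \<bullet> v) *\<^sub>R u \<in> span (insert u B)"
      using span_mono[of B "insert u B"] by auto
    moreover have "(u \<bullet> v) *\<^sub>R u \<in> span (insert u B)"
      by (intro span_mul span_base) simp
    ultimately have "(v - (u \<bullet> v) *\<^sub>R u) + (u \<bullet> v) *\<^sub>R u \<in> span (insert u B)"
      by (rule span_add)
    then show "v \<in> span (insert u B)" by simp
  qed
qed

lemma symmetric_invariant_subspace_orthonormal_eigenbasis:
  fixes A :: "real^'n^'n"
  assumes sym: "transpose A = A"
  shows "subspace S \<Longrightarrow> (\<And>v. v \<in> S \<Longrightarrow> A *v v \<in> S) \<Longrightarrow>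
    \<exists>B. B \<subseteq> S \<and> pairwise orthogonal B \<and> (\<forall>x\<in>B. norm x = 1 \<and> (\<exists>l. A *v x = l *\<^sub>R x)) \<and> span B = S"
proof (induction "dim S" arbitrary: S rule: less_induct)
  case less
  show ?case
  proof (cases "S = {0}")
    case True
    then show ?thesis by (intro exI[of _ "{}"]) auto
  next
    case False
    obtain u where uS: "u \<in> S" and un: "norm u = 1"
      and max: "\<And>w. w \<in> S \<Longrightarrow> w \<bullet> (A *v w) \<le> (u \<bullet> (A *v u)) * (w \<bullet> w)"
      using subspace_max_quadratic_form[OF less.prems(1) False] by blast
    have uu: "u \<bullet> u = 1"
      using un by (simp add: norm_eq_1)
    define l where "l = u \<bullet> (A *v u)"
    have ul: "A *v u = l *\<^sub>R u"
      unfolding l_def using symmetric_max_quadratic_form_eigenvector[OF sym less.prems uS uu max] .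
    define S' where "S' = S \<inter> {v. u \<bullet> v = 0}"
    have sub': "subspace S'"
      unfolding S'_def using less.prems(1) subspace_hyperplane[of u] by (rule subspace_inter)
    have inv': "A *v v \<in> S'" if "v \<in> S'" for v
    proof -
      have "A *v v \<in> S"
        using that less.prems(2) unfolding S'_def by auto
      moreover have "u \<bullet> (A *v v) = 0"
        using inner_matrix_vector_symmetric[OF sym, of u v] ul that unfolding S'_def by auto
      ultimately show ?thesis
        unfolding S'_def by auto
    qed
    have "S' \<subset> S"
      using uS uu unfolding S'_def by (metis Int_iff mem_Collect_eq psubsetI inf_le1 zero_neq_one)
    then have "span S' \<subset> span S"
      using sub' less.prems(1) span_eq_iff by metis
    then have "dim S' < dim S"
      by (rule dim_psubset)
    from less.hyps[OF this sub' inv'] obtain B' where B': "B' \<subseteq> S'" "pairwise orthogonal B'"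
      "\<forall>x\<in>B'. norm x = 1 \<and> (\<exists>l. A *v x = l *\<^sub>R x)" "span B' = S'"
      by blast
    show ?thesis
    proof (intro exI[of _ "insert u B'"] conjI)
      show "insert u B' \<subseteq> S"
        using B'(1) uS unfolding S'_def by auto
      show "pairwise orthogonal (insert u B')"
        using B'(1,2) unfolding pairwise_insert S'_def orthogonal_def by (auto simp: inner_commute)
      show "\<forall>x\<in>insert u B'. norm x = 1 \<and> (\<exists>l. A *v x = l *\<^sub>R x)"
        using B'(3) un ul by auto
      show "span (insert u B') = S"
        using B'(4) unfolding S'_def by (rule span_insert_unit_orthogonal_complement[OF less.prems(1) uS uu])
    qed
  qed
qed

(* On real^'n^'n the operator ^ is the entrywise power, hence a separate matrix power. *)
fun matpow :: "'a::semiring_1^'n^'n \<Rightarrow> nat \<Rightarrow> 'a^'n^'n" where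
  "matpow A 0 = mat 1"
| "matpow A (Suc k) = A ** matpow A k"

lemma poly_det:
  fixes M :: "'a::comm_ring_1 poly^'n^'n"
  shows "poly (det M) x = det (\<chi> i j. poly (M $ i $ j) x)"
  unfolding det_def by (simp add: poly_sum poly_prod)

locale orthonormal_eigenbasis =
  fixes A :: "real^'n::finite^'n" and b :: "'n \<Rightarrow> real^'n" and d :: "'n \<Rightarrow> real"
  assumes orthonormal: "\<And>s t. b s \<bullet> b t = (if s = t then 1 else 0)"
    and eigen: "\<And>s. A *v b s = d s *\<^sub>R b s"
begin

lemma sum_component_mult: "(\<Sum>s\<in>UNIV. b s $ i * b s $ j) = (if i = j then 1 else 0)"
proof -
  define Q :: "real^'n^'n" where "Q = (\<chi> i s. b s $ i)"
  have "transpose Q ** Q = mat 1"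
    unfolding Q_def
    by (simp add: matrix_matrix_mult_def transpose_def mat_def vec_eq_iff
        orthonormal[unfolded inner_vec_def, simplified])
  then have "Q ** transpose Q = mat 1"
    using matrix_left_right_inverse by blast
  then have "(Q ** transpose Q) $ i $ j = (mat 1 :: real^'n^'n) $ i $ j" by simp
  then show ?thesis
    unfolding Q_def by (simp add: matrix_matrix_mult_def transpose_def mat_def)
qed

lemma expansion: "v = (\<Sum>s\<in>UNIV. (b s \<bullet> v) *\<^sub>R b s)"
proof (subst vec_eq_iff, intro allI)
  fix i
  have "(\<Sum>s\<in>UNIV. (b s \<bullet> v) *\<^sub>R b s) $ i = (\<Sum>s\<in>UNIV. \<Sum>j\<in>UNIV. v $ j * (b s $ j * b s $ i))"
    by (simp add: inner_vec_def sum_distrib_left sum_distrib_right mult_ac)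
  also have "\<dots> = (\<Sum>j\<in>UNIV. v $ j * (\<Sum>s\<in>UNIV. b s $ j * b s $ i))"
    by (subst sum.swap) (simp add: sum_distrib_left)
  also have "\<dots> = v $ i"
    by (simp add: sum_component_mult if_distrib cong: if_cong)
  finally show "v $ i = (\<Sum>s\<in>UNIV. (b s \<bullet> v) *\<^sub>R b s) $ i" by simp
qed

lemma parseval: "(\<Sum>s\<in>UNIV. (b s \<bullet> v)\<^sup>2) = v \<bullet> v"
proof -
  have "v \<bullet> v = v \<bullet> (\<Sum>s\<in>UNIV. (b s \<bullet> v) *\<^sub>R b s)"
    using expansion[of v] by simp
  then show ?thesis
    by (simp add: inner_sum_right power2_eq_square inner_commute)
qed

lemma entry_product_if_parallel_ones:
  assumes p: "b p \<bullet> (\<chi> k. 1) \<noteq> 0" and orth: "\<And>s. s \<noteq> p \<Longrightarrow> b s \<bullet> (\<chi> k. 1) = 0"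
  shows "b p $ i * b p $ j = 1 / CARD('n)"
proof -
  define e :: "real^'n" where "e = (\<chi> k. 1)"
  have only_p: "(\<Sum>s\<in>UNIV. f s) = f p" if "\<And>s. s \<noteq> p \<Longrightarrow> f s = 0" for f :: "'n \<Rightarrow> 'z::comm_monoid_add"
    using that by (subst sum.remove[of UNIV p]) (auto intro: sum.neutral)
  have "e = (b p \<bullet> e) *\<^sub>R b p"
    using expansion[of e] only_p[of "\<lambda>s. (b s \<bullet> e) *\<^sub>R b s"] orth unfolding e_def by simp
  then have "e $ k = ((b p \<bullet> e) *\<^sub>R b p) $ k" for k
    by simp
  then have "b p $ k = 1 / (b p \<bullet> e)" for k
    using p unfolding e_def by (simp add: field_simps)
  moreover have "(b p \<bullet> e)\<^sup>2 = CARD('n)"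
    using parseval[of e] only_p[of "\<lambda>s. (b s \<bullet> e)\<^sup>2"] orth unfolding e_def
    by (simp add: inner_vec_def)
  ultimately show ?thesis
    by (simp add: power2_eq_square)
qed

lemma eigen_matrix_vector:
  assumes "\<And>s. M *v b s = e s *\<^sub>R b s"
  shows "M *v v = (\<Sum>s\<in>UNIV. (e s * (b s \<bullet> v)) *\<^sub>R b s)"
proof -
  have "M *v v = M *v (\<Sum>s\<in>UNIV. (b s \<bullet> v) *\<^sub>R b s)"
    using expansion[of v] by simp
  also have "\<dots> = (\<Sum>s\<in>UNIV. (b s \<bullet> v) *\<^sub>R (M *v b s))"
    by (simp add: linear_sum[OF matrix_vector_mul_linear] matrix_vector_mult_scaleR)
  finally show ?thesis
    by (simp add: assms mult.commute)
qed

lemma eigen_entry: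
  assumes "\<And>s. M *v b s = e s *\<^sub>R b s"
  shows "M $ i $ j = (\<Sum>s\<in>UNIV. e s * b s $ i * b s $ j)"
proof -
  have "M $ i $ j = (M *v axis j 1) $ i"
    by (simp add: matrix_vector_mult_def axis_def if_distrib cong: if_cong)
  then show ?thesis
    unfolding eigen_matrix_vector[OF assms] by (simp add: inner_axis mult_ac)
qed

lemma quadratic_form: "v \<bullet> (A *v v) = (\<Sum>s\<in>UNIV. d s * (b s \<bullet> v)\<^sup>2)"
  unfolding eigen_matrix_vector[OF eigen]
  by (simp add: inner_sum_right power2_eq_square inner_commute mult_ac)

lemma symmetric: "transpose A = A"
  by (simp add: vec_eq_iff transpose_def eigen_entry[OF eigen] mult_ac)

lemma matpow_eigen: "matpow A k *v b s = d s ^ k *\<^sub>R b s"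
  by (induction k) (simp_all add: matrix_vector_mul_assoc[symmetric] eigen matrix_vector_mult_scaleR)

lemma matpow_entry: "matpow A k $ i $ j = (\<Sum>s\<in>UNIV. d s ^ k * b s $ i * b s $ j)"
  by (rule eigen_entry[OF matpow_eigen])

lemma char_poly_eq: "char_poly A = (\<Prod>s\<in>UNIV. [:- d s, 1:])"
proof -
  define Q :: "real^'n^'n" where "Q = (\<chi> i s. b s $ i)"
  have QQ: "Q ** transpose Q = mat 1"
    unfolding Q_def
    by (simp add: matrix_matrix_mult_def transpose_def mat_def vec_eq_iff sum_component_mult)
  have "poly (char_poly A) x = (\<Prod>s\<in>UNIV. x - d s)" for x
  proof -
    define D :: "real^'n^'n" where "D = (\<chi> s t. if s = t then x - d s else 0)"
    have "(x *\<^sub>R mat 1 - A) *v b s = (x - d s) *\<^sub>R b s" for s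
      by (simp add: matrix_vector_mult_diff_rdistrib eigen scaleR_diff_left
          scaleR_matrix_vector_assoc[symmetric])
    note xA = eigen_entry[OF this]
    have QDQ: "(Q ** D ** transpose Q) $ i $ j = (\<Sum>s\<in>UNIV. (x - d s) * b s $ i * b s $ j)" for i j
      unfolding Q_def D_def
      by (simp add: matrix_matrix_mult_def transpose_def if_distrib if_distribR mult_ac
          cong: if_cong)
    have "poly (char_poly A) x = det (x *\<^sub>R mat 1 - A)"
      unfolding char_poly_def poly_det
      by (auto simp: vec_eq_iff mat_def intro!: arg_cong[where f = det])
    also have "x *\<^sub>R mat 1 - A = Q ** D ** transpose Q"
      unfolding vec_eq_iff xA QDQ by blast
    also have "det (Q ** D ** transpose Q) = det D * (det Q * det (transpose Q))"
      by (simp add: det_mul)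
    also have "det Q * det (transpose Q) = 1"
      using QQ by (metis det_I det_mul)
    also have "det D = (\<Prod>s\<in>UNIV. x - d s)"
      unfolding D_def by (subst det_diagonal) auto
    finally show ?thesis by simp
  qed
  then have "poly (char_poly A) = poly (\<Prod>s\<in>UNIV. [:- d s, 1:])"
    by (simp add: poly_prod fun_eq_iff)
  then show ?thesis
    by (simp add: poly_eq_poly_eq_iff)
qed

lemma eigvals_eq: "eigvals A = (\<Sum>s\<in>UNIV. {# d s #})"
  unfolding eigvals_def char_poly_eq by (subst proots_prod) auto

lemma lambda_min_eq: "lambda_min A = Min (range d)"
  unfolding lambda_min_def eigvals_eq by (simp add: set_mset_sum UNION_singleton_eq_range)

lemma lambda_min_le_quadratic_form: "lambda_min A * (v \<bullet> v) \<le> v \<bullet> (A *v v)"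
proof -
  have "lambda_min A * (v \<bullet> v) = (\<Sum>s\<in>UNIV. lambda_min A * (b s \<bullet> v)\<^sup>2)"
    by (simp add: parseval sum_distrib_left[symmetric])
  also have "\<dots> \<le> (\<Sum>s\<in>UNIV. d s * (b s \<bullet> v)\<^sup>2)"
    by (intro sum_mono mult_right_mono) (auto simp: lambda_min_eq)
  finally show ?thesis
    by (simp add: quadratic_form)
qed

end

lemma symmetric_orthonormal_eigenbasis:
  fixes A :: "real^'n^'n"
  assumes sym: "transpose A = A"
  obtains b d where "orthonormal_eigenbasis A b d"
proof -
  obtain B where B: "pairwise orthogonal B" "\<forall>x\<in>B. norm x = 1 \<and> (\<exists>l. A *v x = l *\<^sub>R x)"
    "span B = UNIV"
    using symmetric_invariant_subspace_orthonormal_eigenbasis[OF sym, of UNIV] by auto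
  have "0 \<notin> B"
    using B(2) by force
  then have ind: "independent B"
    using B(1) by (rule pairwise_orthogonal_independent[rotated])
  have "card B = dim (span B)"
    using ind dim_span_eq_card_independent by metis
  then have "card (UNIV :: 'n set) = card B"
    using B(3) by simp
  then obtain h where h: "bij_betw h (UNIV :: 'n set) B"
    using finite_same_card_bij[OF finite] ind independent_bound by blast
  have "\<exists>l. A *v h s = l *\<^sub>R h s" for s
    using h B(2) bij_betwE by blast
  then obtain d where d: "\<And>s. A *v h s = d s *\<^sub>R h s"
    by metis
  have "h s \<bullet> h t = (if s = t then 1 else 0)" for s t
  proof (cases "s = t")
    case True
    have "norm (h s) = 1"
      using h B(2) bij_betwE by blast
    then show ?thesis
      using True by (simp add: norm_eq_1)
  next
    case False
    then have "h s \<noteq> h t"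
      using h by (metis bij_betw_def inj_def)
    moreover have "h s \<in> B" "h t \<in> B"
      using h bij_betwE by blast+
    ultimately show ?thesis
      using B(1) False unfolding pairwise_def orthogonal_def by auto
  qed
  with d show ?thesis
    by (intro that[of h d]) (simp add: orthonormal_eigenbasis_def)
qed

section \<open>Powers of a symmetric stochastic matrix\<close>

(* No size hypothesis is needed: for size M < 2 the bound holds whatever the junk value of the index. *)
lemma size_filter_above_second_largest:
  fixes M :: "'a::linorder multiset"
  shows "size {# x \<in># M. rev (sorted_list_of_multiset M) ! 1 < x #} \<le> 1"
proof (cases "size M < 2")
  case True
  have "size {# x \<in># M. rev (sorted_list_of_multiset M) ! 1 < x #} \<le> size M"
    by (rule size_filter_mset_lesseq)
  with True show ?thesis
    by linarith
next
  case False
  define xs where "xs = sorted_list_of_multiset M"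
  define n where "n = length xs"
  have M: "M = mset xs"
    unfolding xs_def by simp
  then have n2: "2 \<le> n"
    using False unfolding n_def by simp
  have second: "rev xs ! 1 = xs ! (n - 2)"
    using n2 unfolding n_def by (simp add: rev_nth numeral_2_eq_2)
  have "{i. i < n \<and> xs ! (n - 2) < xs ! i} \<subseteq> {n - 1}"
  proof
    fix i assume i: "i \<in> {i. i < n \<and> xs ! (n - 2) < xs ! i}"
    have "\<not> i \<le> n - 2"
    proof
      assume "i \<le> n - 2"
      moreover have "sorted xs"
        unfolding xs_def by simp
      ultimately have "xs ! i \<le> xs ! (n - 2)"
        using n2 unfolding n_def by (intro sorted_nth_mono) auto
      then show False
        using i leD by blast
    qed
    then show "i \<in> {n - 1}"
      using i by auto
  qed
  then have "card {i. i < n \<and> xs ! (n - 2) < xs ! i} \<le> card {n - 1}"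
    by (intro card_mono) auto
  moreover have "size {# x \<in># M. rev (sorted_list_of_multiset M) ! 1 < x #}
      = length (filter (\<lambda>x. xs ! (n - 2) < x) xs)"
    unfolding xs_def[symmetric] second by (metis M mset_filter size_mset)
  ultimately show ?thesis
    by (simp add: length_filter_conv_card n_def)
qed

locale stochastic_eigenbasis = orthonormal_eigenbasis A b d
  for A :: "real^'n::finite^'n" and b d +
  assumes stochastic: "A *v (\<chi> k. 1) = (\<chi> k. 1)"
    and card_ge_2: "2 \<le> CARD('n)"
    and rho_lt_1: "rho A < 1"
begin

lemma rho_eq: "rho A = max (eig_desc A ! 1) (- Min (range d))"
  unfolding rho_def lambda_min_eq ..

lemma unique_above_second_eigenvalue:
  assumes "eig_desc A ! 1 < d s" and "eig_desc A ! 1 < d s'"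
  shows "s = s'"
proof (rule ccontr)
  assume "s \<noteq> s'"
  have "eigvals A = {# d s #} + (\<Sum>u\<in>UNIV - {s}. {# d u #})"
    unfolding eigvals_eq by (rule sum.remove) auto
  also have "(\<Sum>u\<in>UNIV - {s}. {# d u #}) = {# d s' #} + (\<Sum>u\<in>UNIV - {s} - {s'}. {# d u #})"
    using \<open>s \<noteq> s'\<close> by (intro sum.remove) auto
  finally have "eigvals A = {# d s, d s' #} + (\<Sum>u\<in>UNIV - {s} - {s'}. {# d u #})"
    by simp
  then have "{# d s, d s' #} \<subseteq># eigvals A"
    by (metis mset_subset_eq_add_left)
  then have "size {# x \<in># {# d s, d s' #}. eig_desc A ! 1 < x #}
      \<le> size {# x \<in># eigvals A. eig_desc A ! 1 < x #}"
    by (intro size_mset_mono multiset_filter_mono)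
  moreover have "size {# x \<in># eigvals A. eig_desc A ! 1 < x #} \<le> 1"
    unfolding eig_desc_def by (rule size_filter_above_second_largest)
  ultimately show False
    using assms by simp
qed

lemma eigenvalue_one_if_not_orthogonal_ones:
  assumes "b s \<bullet> (\<chi> k. 1) \<noteq> 0"
  shows "d s = 1"
proof -
  have "b s \<bullet> (\<chi> k. 1) = (A *v b s) \<bullet> (\<chi> k. 1)"
    using inner_matrix_vector_symmetric[OF symmetric] stochastic by metis
  then show ?thesis
    using assms by (simp add: eigen)
qed

lemma others_orthogonal_ones:
  assumes p: "b p \<bullet> (\<chi> k. 1) \<noteq> 0" and "s \<noteq> p"
  shows "b s \<bullet> (\<chi> k. 1) = 0" and "\<bar>d s\<bar> \<le> rho A"
proof -
  have above: "eig_desc A ! 1 < d p"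
    using eigenvalue_one_if_not_orthogonal_ones[OF p] rho_lt_1 unfolding rho_eq by linarith
  then have not_above: "\<not> eig_desc A ! 1 < d s"
    using unique_above_second_eigenvalue[OF _ above] \<open>s \<noteq> p\<close> by blast
  show "b s \<bullet> (\<chi> k. 1) = 0"
  proof (rule ccontr)
    assume "b s \<bullet> (\<chi> k. 1) \<noteq> 0"
    then have "d s = 1"
      by (rule eigenvalue_one_if_not_orthogonal_ones)
    with not_above above show False
      using eigenvalue_one_if_not_orthogonal_ones[OF p] by simp
  qed
  have "Min (range d) \<le> d s" by simp
  then show "\<bar>d s\<bar> \<le> rho A"
    using not_above unfolding rho_eq by linarith
qed

(* Every basis vector not orthogonal to the all-ones vector has eigenvalue 1 > lambda_2, so there
  is exactly one such vector, and it is +-1/sqrt m. *)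
lemma perron_eigenvector:
  "\<exists>p. d p = 1 \<and> (\<forall>i j. b p $ i * b p $ j = 1 / CARD('n)) \<and> (\<forall>s. s \<noteq> p \<longrightarrow> \<bar>d s\<bar> \<le> rho A)"
proof -
  have "\<exists>p. b p \<bullet> (\<chi> k. 1) \<noteq> 0"
  proof (rule ccontr)
    assume "\<nexists>p. b p \<bullet> (\<chi> k. 1) \<noteq> 0"
    then have "(\<Sum>s\<in>UNIV. (b s \<bullet> (\<chi> k. 1))\<^sup>2) = 0"
      by simp
    then have "(\<chi> k. 1) \<bullet> (\<chi> k. 1 :: real^'n) = 0"
      by (simp only: parseval)
    then show False
      by (simp add: inner_vec_def)
  qed
  then obtain p where p: "b p \<bullet> (\<chi> k. 1) \<noteq> 0" ..
  show ?thesis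
  proof (intro exI[of _ p] conjI allI impI)
    show "d p = 1"
      by (rule eigenvalue_one_if_not_orthogonal_ones[OF p])
    show "b p $ i * b p $ j = 1 / CARD('n)" for i j
      by (rule entry_product_if_parallel_ones[OF p others_orthogonal_ones(1)[OF p]])
    show "\<bar>d s\<bar> \<le> rho A" if "s \<noteq> p" for s
      by (rule others_orthogonal_ones(2)[OF p that])
  qed
qed

lemma rho_nonneg: "0 \<le> rho A"
proof -
  obtain p where p: "\<forall>s. s \<noteq> p \<longrightarrow> \<bar>d s\<bar> \<le> rho A"
    using perron_eigenvector by blast
  have "UNIV \<noteq> {p}"
  proof
    assume "UNIV = {p}"
    then have "CARD('n) = card {p}"
      by (rule arg_cong)
    with card_ge_2 show False
      by simp
  qed
  then obtain s where "s \<noteq> p" by auto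
  then show ?thesis
    using p by force
qed

lemma matpow_deviation: "\<bar>matpow A k $ i $ j - 1 / CARD('n)\<bar> \<le> rho A ^ k"
proof -
  obtain p where dp: "d p = 1" and bp: "\<forall>i j. b p $ i * b p $ j = 1 / CARD('n)"
    and bound: "\<forall>s. s \<noteq> p \<longrightarrow> \<bar>d s\<bar> \<le> rho A"
    using perron_eigenvector by blast
  have "matpow A k $ i $ j - 1 / CARD('n) = (\<Sum>s\<in>UNIV - {p}. d s ^ k * b s $ i * b s $ j)"
    using sum.remove[of UNIV p "\<lambda>s. d s ^ k * b s $ i * b s $ j"] dp bp
    by (simp add: matpow_entry mult.assoc)
  also have "\<bar>\<dots>\<bar> \<le> (\<Sum>s\<in>UNIV - {p}. \<bar>d s ^ k * b s $ i * b s $ j\<bar>)"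
    by (rule sum_abs)
  also have "\<dots> \<le> (\<Sum>s\<in>UNIV - {p}. rho A ^ k * (((b s $ i)\<^sup>2 + (b s $ j)\<^sup>2) / 2))"
  proof (rule sum_mono)
    fix s assume "s \<in> UNIV - {p}"
    then have "\<bar>d s ^ k\<bar> \<le> rho A ^ k"
      using bound by (simp add: power_abs power_mono)
    moreover have "\<bar>b s $ i * b s $ j\<bar> \<le> ((b s $ i)\<^sup>2 + (b s $ j)\<^sup>2) / 2"
      using sum_squares_bound[of "\<bar>b s $ i\<bar>" "\<bar>b s $ j\<bar>"] by (simp add: abs_mult mult.assoc)
    ultimately have "\<bar>d s ^ k\<bar> * \<bar>b s $ i * b s $ j\<bar> \<le> rho A ^ k * (((b s $ i)\<^sup>2 + (b s $ j)\<^sup>2) / 2)"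
      by (intro mult_mono) auto
    then show "\<bar>d s ^ k * b s $ i * b s $ j\<bar> \<le> rho A ^ k * (((b s $ i)\<^sup>2 + (b s $ j)\<^sup>2) / 2)"
      by (simp add: abs_mult mult_ac)
  qed
  also have "\<dots> \<le> (\<Sum>s\<in>UNIV. rho A ^ k * (((b s $ i)\<^sup>2 + (b s $ j)\<^sup>2) / 2))"
    by (rule sum_mono2) (auto intro!: mult_nonneg_nonneg divide_nonneg_nonneg zero_le_power rho_nonneg)
  also have "\<dots> = rho A ^ k * (((\<Sum>s\<in>UNIV. (b s $ i)\<^sup>2) + (\<Sum>s\<in>UNIV. (b s $ j)\<^sup>2)) / 2)"
    by (simp add: sum_distrib_left[symmetric] sum.distrib[symmetric] sum_divide_distrib[symmetric])
  also have "\<dots> = rho A ^ k"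
    using sum_component_mult[of i i] sum_component_mult[of j j] by (simp add: power2_eq_square)
  finally show ?thesis .
qed

end

lemma symmetric_stochastic_matpow_deviation:
  fixes W :: "real^'m^'m"
  assumes "transpose W = W" and "W *v (\<chi> k. 1) = (\<chi> k. 1)"
    and "2 \<le> CARD('m)" and "rho W < 1"
  shows "0 \<le> rho W" and "\<bar>matpow W k $ i $ j - 1 / CARD('m)\<bar> \<le> rho W ^ k"
proof -
  obtain b d where "orthonormal_eigenbasis W b d"
    using symmetric_orthonormal_eigenbasis[OF assms(1)] .
  then interpret stochastic_eigenbasis W b d
    using assms by (simp add: stochastic_eigenbasis_def stochastic_eigenbasis_axioms_def)
  show "0 \<le> rho W" and "\<bar>matpow W k $ i $ j - 1 / CARD('m)\<bar> \<le> rho W ^ k"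
    by (rule rho_nonneg, rule matpow_deviation)
qed

lemma matpow_nonneg: "(\<And>i j. 0 \<le> W $ i $ j) \<Longrightarrow> 0 \<le> matpow W k $ i $ j"
  for W :: "real^'m^'m"
  by (induction k arbitrary: i j) (auto simp: matrix_matrix_mult_def mat_def intro!: sum_nonneg)

lemma matpow_row_sum:
  fixes W :: "real^'m^'m"
  assumes "W *v (\<chi> k. 1) = (\<chi> k. 1)"
  shows "(\<Sum>j\<in>UNIV. matpow W k $ i $ j) = 1"
proof -
  have "matpow W k *v (\<chi> k. 1) = (\<chi> k. 1)"
    by (induction k) (simp_all add: matrix_vector_mul_assoc[symmetric] assms)
  then have "(matpow W k *v (\<chi> k. 1)) $ i = 1"
    by simp
  then show ?thesis
    by (simp add: matrix_vector_mult_def)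
qed

lemma cons_iter_matpow: "cons_iter W B k i = (\<Sum>j\<in>UNIV. matpow W k $ i $ j *\<^sub>R B j)"
proof (induction k arbitrary: i)
  case 0
  have "(\<Sum>j\<in>UNIV. matpow W 0 $ i $ j *\<^sub>R B j) = (\<Sum>j\<in>UNIV. if i = j then B j else 0)"
    by (intro sum.cong) (auto simp: mat_def)
  then show ?case
    by simp
next
  case (Suc k)
  have "cons_iter W B (Suc k) i = (\<Sum>l\<in>UNIV. \<Sum>j\<in>UNIV. (W $ i $ l * matpow W k $ l $ j) *\<^sub>R B j)"
    by (simp add: Suc scaleR_sum_right)
  also have "\<dots> = (\<Sum>j\<in>UNIV. matpow W (Suc k) $ i $ j *\<^sub>R B j)"
    by (subst sum.swap) (simp add: matrix_matrix_mult_def scaleR_sum_left)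
  finally show ?case .
qed

section \<open>Coercive matrices and their inverses\<close>

definition coercive :: "real^'n^'n \<Rightarrow> real \<Rightarrow> bool" where
  "coercive A c \<longleftrightarrow> (\<forall>v. c * (v \<bullet> v) \<le> v \<bullet> (A *v v))"

lemma coercive_mono: "coercive A c' \<Longrightarrow> c \<le> c' \<Longrightarrow> coercive A c"
  unfolding coercive_def by (meson inner_ge_zero mult_right_mono order_trans)

lemma symmetric_coercive_lambda_min: "transpose A = A \<Longrightarrow> coercive A (lambda_min A)"
  by (metis coercive_def symmetric_orthonormal_eigenbasis
      orthonormal_eigenbasis.lambda_min_le_quadratic_form)

lemma symmetric_lambda_min_ge:
  fixes A :: "real^'n^'n"
  assumes "transpose A = A" and "coercive A c"
  shows "c \<le> lambda_min A"
proof -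
  obtain b d where "orthonormal_eigenbasis A b d"
    using symmetric_orthonormal_eigenbasis[OF assms(1)] .
  then interpret orthonormal_eigenbasis A b d .
  have "c \<le> d s" for s
    using assms(2) eigen[of s] orthonormal[of s s] unfolding coercive_def
    by (metis inner_scaleR_right mult.right_neutral)
  then show ?thesis
    by (simp add: lambda_min_eq)
qed

lemma coercive_norm_ge: "coercive A c \<Longrightarrow> c * norm v \<le> norm (A *v v)"
proof (cases "v = 0")
  case False
  assume "coercive A c"
  then have "c * (norm v * norm v) \<le> norm v * norm (A *v v)"
    using norm_cauchy_schwarz[of v "A *v v"] unfolding coercive_def
    by (metis dual_order.trans power2_eq_square power2_norm_eq_inner)
  then show ?thesis
    using False by (simp add: mult.assoc[symmetric] mult.commute[of c])
qed simp

lemma coercive_invertible: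
  fixes A :: "real^'n^'n"
  assumes "0 < c" and "coercive A c"
  shows "invertible A"
proof -
  have "inj ((*v) A)"
  proof (rule injI)
    fix v w assume "A *v v = A *v w"
    then have "c * norm (v - w) \<le> 0"
      using coercive_norm_ge[OF assms(2), of "v - w"] by (simp add: matrix_vector_mult_diff_distrib)
    then show "v = w"
      using assms(1) by (simp add: mult_le_0_iff)
  qed
  then show ?thesis
    using invertible_left_inverse matrix_left_invertible_injective by blast
qed

lemma invertible_matrix_inv:
  fixes A :: "real^'n^'n"
  assumes "invertible A"
  shows "A ** matrix_inv A = mat 1" and "matrix_inv A ** A = mat 1"
  using someI_ex[OF assms[unfolded invertible_def]] unfolding matrix_inv_def by auto

lemma coercive_norm_matrix_inv_le:
  fixes A :: "real^'n^'n"
  assumes "0 < c" and "coercive A c"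
  shows "norm (matrix_inv A *v w) \<le> norm w / c"
proof -
  have "A *v (matrix_inv A *v w) = w"
    using invertible_matrix_inv(1)[OF coercive_invertible[OF assms]]
    by (simp add: matrix_vector_mul_assoc)
  then show ?thesis
    using coercive_norm_ge[OF assms(2), of "matrix_inv A *v w"] assms(1)
    by (simp add: field_simps)
qed

lemma norm_matrix_vector_le_spec_norm: "norm (A *v v) \<le> spec_norm A * norm v"
  unfolding spec_norm_def by (rule onorm) (rule matrix_vector_mul_bounded_linear)

lemma spec_norm_le: "(\<And>v. norm (A *v v) \<le> K * norm v) \<Longrightarrow> spec_norm A \<le> K"
  unfolding spec_norm_def by (rule onorm_le)

lemma spec_norm_nonneg: "0 \<le> spec_norm A"
  unfolding spec_norm_def by (rule onorm_pos_le) (rule matrix_vector_mul_bounded_linear)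

lemma spec_norm_sum_scaleR_le:
  "spec_norm (\<Sum>j\<in>S. a j *\<^sub>R M j) \<le> (\<Sum>j\<in>S. \<bar>a j\<bar> * spec_norm (M j))"
proof (rule spec_norm_le)
  fix v
  have "(\<Sum>j\<in>S. a j *\<^sub>R M j) *v v = (\<Sum>j\<in>S. a j *\<^sub>R (M j *v v))"
    by (induction S rule: infinite_finite_induct)
      (simp_all add: matrix_vector_mult_add_rdistrib scaleR_matrix_vector_assoc[symmetric])
  then have "norm ((\<Sum>j\<in>S. a j *\<^sub>R M j) *v v) \<le> (\<Sum>j\<in>S. \<bar>a j\<bar> * norm (M j *v v))"
    using norm_sum[of "\<lambda>j. a j *\<^sub>R (M j *v v)" S] by simp
  also have "\<dots> \<le> (\<Sum>j\<in>S. \<bar>a j\<bar> * spec_norm (M j) * norm v)"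
    by (intro sum_mono) (simp add: mult.assoc mult_left_mono norm_matrix_vector_le_spec_norm)
  finally show "norm ((\<Sum>j\<in>S. a j *\<^sub>R M j) *v v) \<le> (\<Sum>j\<in>S. \<bar>a j\<bar> * spec_norm (M j)) * norm v"
    by (simp add: sum_distrib_right)
qed

lemma coercive_convex_combination:
  assumes "\<And>j. j \<in> S \<Longrightarrow> 0 \<le> w j" and "(\<Sum>j\<in>S. w j) = 1"
    and "\<And>j. j \<in> S \<Longrightarrow> coercive (B j) c"
  shows "coercive (\<Sum>j\<in>S. w j *\<^sub>R B j) c"
  unfolding coercive_def
proof
  fix v
  have "v \<bullet> ((\<Sum>j\<in>S. w j *\<^sub>R B j) *v v) = (\<Sum>j\<in>S. w j * (v \<bullet> (B j *v v)))"
    by (induction S rule: infinite_finite_induct)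
      (simp_all add: matrix_vector_mult_add_rdistrib scaleR_matrix_vector_assoc[symmetric] inner_add_right)
  also have "\<dots> \<ge> (\<Sum>j\<in>S. w j * (c * (v \<bullet> v)))"
    using assms(1,3) unfolding coercive_def by (intro sum_mono mult_left_mono) auto
  also have "(\<Sum>j\<in>S. w j * (c * (v \<bullet> v))) = c * (v \<bullet> v)"
    using assms(2) by (simp add: sum_distrib_right[symmetric])
  finally show "c * (v \<bullet> v) \<le> v \<bullet> ((\<Sum>j\<in>S. w j *\<^sub>R B j) *v v)" .
qed

(* A^-1 - B^-1 = A^-1 (B - A) B^-1 *)
lemma spec_norm_matrix_inv_diff_le:
  fixes A B :: "real^'n^'n"
  assumes c: "0 < c" and A: "coercive A c" and B: "coercive B c"
  shows "spec_norm (matrix_inv A - matrix_inv B) \<le> spec_norm (B - A) / c\<^sup>2"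
proof (rule spec_norm_le)
  fix w
  define u where "u = matrix_inv B *v w"
  have Bu: "B *v u = w"
    using invertible_matrix_inv(1)[OF coercive_invertible[OF c B]]
    unfolding u_def by (simp add: matrix_vector_mul_assoc)
  have Au: "matrix_inv A *v (A *v u) = u"
    using invertible_matrix_inv(2)[OF coercive_invertible[OF c A]]
    by (simp add: matrix_vector_mul_assoc)
  have "(matrix_inv A - matrix_inv B) *v w = matrix_inv A *v ((B - A) *v u)"
    by (simp add: matrix_vector_mult_diff_rdistrib matrix_vector_mult_diff_distrib Bu Au)
      (simp add: u_def)
  also have "norm \<dots> \<le> spec_norm (B - A) * norm u / c"
    using coercive_norm_matrix_inv_le[OF c A] norm_matrix_vector_le_spec_norm[of "B - A" u] c
    by (meson divide_right_mono less_imp_le order_trans)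
  also have "\<dots> \<le> spec_norm (B - A) * (norm w / c) / c"
    using coercive_norm_matrix_inv_le[OF c B, of w] c spec_norm_nonneg[of "B - A"]
    unfolding u_def by (intro divide_right_mono mult_left_mono) auto
  finally show "norm ((matrix_inv A - matrix_inv B) *v w) \<le> spec_norm (B - A) / c\<^sup>2 * norm w"
    by (simp add: power2_eq_square)
qed

lemma consensus_inverse_deviation:
  fixes W :: "real^'m^'m" and B :: "'m \<Rightarrow> real^'n^'n"
  assumes W_sym: "transpose W = W" and W_stoch: "W *v (\<chi> k. 1) = (\<chi> k. 1)"
    and W_nonneg: "\<And>i j. 0 \<le> W $ i $ j" and m2: "2 \<le> CARD('m)" and W_rho: "rho W < 1"
    and c: "0 < c" and B_coercive: "\<And>j. coercive (B j) c"
    and B_norm: "\<And>j. spec_norm (B j) \<le> N"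
  shows "spec_norm (matrix_inv (cons_iter W B T i) - matrix_inv ((1 / CARD('m)) *\<^sub>R (\<Sum>j\<in>UNIV. B j)))
    \<le> CARD('m) * rho W ^ T * N / c\<^sup>2"
proof -
  define P where "P = matpow W T"
  have A: "cons_iter W B T i = (\<Sum>j\<in>UNIV. P $ i $ j *\<^sub>R B j)"
    unfolding P_def by (rule cons_iter_matpow)
  have Avg: "(1 / CARD('m)) *\<^sub>R (\<Sum>j\<in>UNIV. B j) = (\<Sum>j\<in>UNIV. (1 / CARD('m)) *\<^sub>R B j)"
    by (rule scaleR_sum_right)
  have "coercive (cons_iter W B T i) c"
    unfolding A P_def using W_nonneg W_stoch B_coercive
    by (intro coercive_convex_combination matpow_nonneg matpow_row_sum)
  moreover have "coercive ((1 / CARD('m)) *\<^sub>R (\<Sum>j\<in>UNIV. B j)) c"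
    unfolding Avg using B_coercive by (intro coercive_convex_combination) auto
  moreover have "spec_norm ((1 / CARD('m)) *\<^sub>R (\<Sum>j\<in>UNIV. B j) - cons_iter W B T i)
      \<le> CARD('m) * rho W ^ T * N"
  proof -
    have "(1 / CARD('m)) *\<^sub>R (\<Sum>j\<in>UNIV. B j) - cons_iter W B T i
        = (\<Sum>j\<in>UNIV. (1 / CARD('m) - P $ i $ j) *\<^sub>R B j)"
      unfolding A Avg by (simp add: sum_subtractf[symmetric] scaleR_diff_left)
    then have "spec_norm ((1 / CARD('m)) *\<^sub>R (\<Sum>j\<in>UNIV. B j) - cons_iter W B T i)
        \<le> (\<Sum>j\<in>UNIV. \<bar>1 / CARD('m) - P $ i $ j\<bar> * spec_norm (B j))"
      using spec_norm_sum_scaleR_le by metis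
    also have "\<dots> \<le> (\<Sum>j\<in>(UNIV :: 'm set). rho W ^ T * N)"
      using symmetric_stochastic_matpow_deviation[OF W_sym W_stoch m2 W_rho] B_norm
      unfolding P_def
      by (intro sum_mono mult_mono) (auto simp: abs_minus_commute spec_norm_nonneg)
    finally show ?thesis by simp
  qed
  ultimately show ?thesis
    using spec_norm_matrix_inv_diff_le[OF c] c by (meson divide_right_mono order_trans zero_le_power2)
qed

section \<open>Sample second-moment matrices\<close>

lemma outer_self_matrix_vector: "outer u u *v v = (u \<bullet> v) *\<^sub>R u"
  by (simp add: vec_eq_iff outer_def matrix_vector_mult_def inner_vec_def sum_distrib_left mult_ac)

lemma sum_outer_symmetric: "transpose (\<Sum>j\<in>S. outer (x j) (x j)) = (\<Sum>j\<in>S. outer (x j) (x j))"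
  by (simp add: vec_eq_iff transpose_def outer_def mult.commute)

lemma sum_outer_quadratic_form:
  "v \<bullet> ((\<Sum>j\<in>S. outer (x j) (x j)) *v v) = (\<Sum>j\<in>S. (x j \<bullet> v)\<^sup>2)"
  by (induction S rule: infinite_finite_induct)
    (simp_all add: matrix_vector_mult_add_rdistrib inner_add_right outer_self_matrix_vector
      power2_eq_square inner_commute)

lemma lambda_min_identity_plus_sum_outer:
  assumes "0 \<le> a"
  shows "1 \<le> lambda_min (mat 1 + a *\<^sub>R (\<Sum>j\<in>S. outer (x j) (x j)))"
proof (rule symmetric_lambda_min_ge)
  show "transpose (mat 1 + a *\<^sub>R (\<Sum>j\<in>S. outer (x j) (x j))) = mat 1 + a *\<^sub>R (\<Sum>j\<in>S. outer (x j) (x j))"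
    by (simp add: vec_eq_iff transpose_def outer_def mat_def mult.commute)
  show "coercive (mat 1 + a *\<^sub>R (\<Sum>j\<in>S. outer (x j) (x j))) 1"
    unfolding coercive_def
    using assms by (simp add: matrix_vector_mult_add_rdistrib scaleR_matrix_vector_assoc[symmetric]
        inner_add_right sum_outer_quadratic_form sum_nonneg)
qed

lemma sum_outer_coercive:
  assumes "0 \<le> c" and "0 \<le> a"
    and "c * lambda_min (mat 1 + a *\<^sub>R (\<Sum>j\<in>S. outer (u j) (u j)))
      \<le> lambda_min (\<Sum>j\<in>S. outer (x j) (x j))"
  shows "coercive (\<Sum>j\<in>S. outer (x j) (x j)) c"
proof (rule coercive_mono)
  show "coercive (\<Sum>j\<in>S. outer (x j) (x j)) (lambda_min (\<Sum>j\<in>S. outer (x j) (x j)))"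
    by (rule symmetric_coercive_lambda_min[OF sum_outer_symmetric])
  show "c \<le> lambda_min (\<Sum>j\<in>S. outer (x j) (x j))"
    using assms mult_left_mono[OF lambda_min_identity_plus_sum_outer[OF assms(2), where S = S and x = u] assms(1)]
    by linarith
qed

lemma deviation_constant_le:
  fixes m n r sigma mu t :: real
  assumes "1 \<le> m" and "1 \<le> n" and "0 \<le> r" and "0 < sigma" and "0 < t"
  shows "m * r * (t * (19 / 8 * sigma ^ 2 + mu ^ 2)) / (t * sigma ^ 2 / 8)\<^sup>2
    \<le> r * ((152 * m powr (3/2) * sqrt (5 * n) / sigma ^ 2
      + 64 * m powr (3/2) * sqrt (5 * n) / sigma ^ 4 * mu ^ 2) / t)"
proof -
  have "m = m powr 1"
    using assms(1) by simp
  also have "\<dots> \<le> m powr (3/2)"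
    using assms(1) by (intro powr_mono) auto
  also have "\<dots> \<le> m powr (3/2) * sqrt (5 * n)"
    using assms(2) by (intro mult_le_cancel_left1[THEN iffD2]) auto
  finally have m: "m \<le> m powr (3/2) * sqrt (5 * n)" .
  have "m * r * (t * (19 / 8 * sigma ^ 2 + mu ^ 2)) / (t * sigma ^ 2 / 8)\<^sup>2
      = r * ((152 * m / sigma ^ 2 + 64 * m / sigma ^ 4 * mu ^ 2) / t)"
    using assms(4,5) by (simp add: field_simps power2_eq_square power4_eq_xxxx)
  also have "\<dots> \<le> r * ((152 * m powr (3/2) * sqrt (5 * n) / sigma ^ 2
      + 64 * m powr (3/2) * sqrt (5 * n) / sigma ^ 4 * mu ^ 2) / t)"
    using m assms by (intro mult_left_mono divide_right_mono add_mono mult_right_mono) auto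
  finally show ?thesis .
qed

theorem proposition4:
  fixes Theta :: "real^'n^'l"
    and x :: "'m::finite \<Rightarrow> nat \<Rightarrow> real^'n::finite"
    and eta :: "'m \<Rightarrow> nat \<Rightarrow> real^'l::finite"
    and y :: "'m \<Rightarrow> nat \<Rightarrow> real^'l"
    and mu :: "'m \<Rightarrow> nat \<Rightarrow> real^'n"
    and E :: "'m \<Rightarrow> 'm \<Rightarrow> bool"
    and W :: "real^'m^'m"
    and sigma_x sigma_eta muhat delta :: real
    and T t :: nat
  assumes model: "\<And>i j. y i j = Theta *v x i j + eta i j"
    and sx: "sigma_x > 0" and se: "sigma_eta > 0"
    and mu_bdd: "bdd_above ((\<lambda>(i, j). norm (mu i j)) ` (UNIV \<times> {1..}))"
    and muhat_def: "muhat = (SUP (i, j)\<in>UNIV \<times> {1..}. norm (mu i j))"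
    and m2: "CARD('m) \<ge> 2"
    and E_sym: "\<And>i j. E i j \<longleftrightarrow> E j i"
    and E_conn: "\<And>i j. E\<^sup>*\<^sup>* i j"
    and W_nonneg: "\<And>i j. W $ i $ j \<ge> 0"
    and W_sparse: "\<And>i j. i \<noteq> j \<Longrightarrow> \<not> E i j \<Longrightarrow> W $ i $ j = 0"
    and W_stoch: "W *v (\<chi> k. 1) = (\<chi> k. 1)"
    and W_sym: "transpose W = W"
    and W_rho: "rho W < 1"
    and delta_pos: "delta > 0"
    and T_pos: "T \<ge> 1"
    and t1: "real t \<ge> 8 * real CARD('n) + 16 * ln (2 / delta)"
    and t2: "real t \<ge> (16 * muhat * (sqrt (4 * real CARD('n)) + sqrt (2 * ln (2 / delta))) / sigma_x) ^ 2"
    and t3: "real t \<ge> 2 * (real CARD('n) + real CARD('l)) * ln (1 / delta)"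
    and E3_norm: "\<And>i. spec_norm (\<Sum>j\<in>{1..t}. outer (x i j) (x i j))
                      \<le> real t * (19 / 8 * sigma_x ^ 2 + muhat ^ 2)"
    and E3_lmin: "\<And>i. lambda_min (\<Sum>j\<in>{1..t}. outer (x i j) (x i j))
                      \<ge> real t * sigma_x ^ 2 / 8 *
                         lambda_min (mat 1 + (4 / (real t * sigma_x ^ 2)) *\<^sub>R (\<Sum>j\<in>{1..t}. outer (mu i j) (mu i j)))"
    and E3_noise: "\<And>i. spec_norm (\<Sum>j\<in>{1..t}. outer (eta i j) (x i j))
                      \<le> sqrt (real t) * sigma_eta *
                         (4 * sigma_x * sqrt ((real CARD('n) + real CARD('l)) * ln (9 / delta))
                          + muhat * (sqrt (2 * (real CARD('l) + real CARD('n))) + sqrt (2 * ln (2 / delta))))"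
  shows "\<forall>i. spec_norm (matrix_inv (cons_iter W (\<lambda>i. \<Sum>j\<in>{1..t}. outer (x i j) (x i j)) T i)
                 - matrix_inv ((1 / real CARD('m)) *\<^sub>R (\<Sum>i\<in>UNIV. \<Sum>j\<in>{1..t}. outer (x i j) (x i j))))
           \<le> rho W ^ T *
             ((152 * real CARD('m) powr (3/2) * sqrt (5 * real CARD('n)) / sigma_x ^ 2
               + 64 * real CARD('m) powr (3/2) * sqrt (5 * real CARD('n)) / sigma_x ^ 4 * muhat ^ 2)
              / real t)"
proof (intro allI)
  fix i
  define B where "B = (\<lambda>i. \<Sum>j\<in>{1..t}. outer (x i j) (x i j))"
  define c where "c = real t * sigma_x ^ 2 / 8"
  define N where "N = real t * (19 / 8 * sigma_x ^ 2 + muhat ^ 2)"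
  show "spec_norm (matrix_inv (cons_iter W B T i)
      - matrix_inv ((1 / real CARD('m)) *\<^sub>R (\<Sum>i\<in>UNIV. B i)))
    \<le> rho W ^ T * ((152 * real CARD('m) powr (3/2) * sqrt (5 * real CARD('n)) / sigma_x ^ 2
      + 64 * real CARD('m) powr (3/2) * sqrt (5 * real CARD('n)) / sigma_x ^ 4 * muhat ^ 2) / real t)"
    (is "?lhs \<le> ?rhs")
  proof (cases "t = 0")
    case True
    (* all beta_j vanish, and the right-hand side is a quotient by 0, hence 0 *)
    then show ?thesis
      by (simp add: B_def cons_iter_matpow spec_norm_def onorm_zero)
  next
    case False
    then have c: "0 < c"
      unfolding c_def using sx by simp
    have "coercive (B j) c" for j
      unfolding B_def c_def using sx E3_lmin[of j] by (intro sum_outer_coercive) auto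
    moreover have "spec_norm (B j) \<le> N" for j
      unfolding B_def N_def by (rule E3_norm)
    ultimately have "?lhs \<le> real CARD('m) * rho W ^ T * N / c\<^sup>2"
      using consensus_inverse_deviation[OF W_sym W_stoch W_nonneg m2 W_rho c] by blast
    also have "\<dots> \<le> ?rhs"
      unfolding N_def c_def using False sx symmetric_stochastic_matpow_deviation(1)[OF W_sym W_stoch m2 W_rho]
      by (intro deviation_constant_le) auto
    finally show ?thesis .
  qed
qed
end
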